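(* Consider Phase-1 training with learning rate $\alpha>0$ on a fixed batch of size $N$, fix $a_\star\in(0,1]$, and let $T_\star := \min\{t : |a_t| \ge a_\star\}$. Let $q_\star := c_0/\sqrt N > 0$. Assume \[ \mathrm{sign}(a_0) = \mathrm{sign}(q_0), \qquad |q_0| \ge q_\star, \] and the stability condition $\alpha a_\star\|\widehat M\|_2 \le \frac12$. Then for all $t < T_\star$ we have $\mathrm{sign}(a_t) = \mathrm{sign}(q_t) = \mathrm{sign}(q_0)$ and $|q_t| \ge |q_0| \ge q_\star$. Consequently, \[ T_\star \le \left\lceil \frac{2(a_\star - |a_0|)_+}{\alpha q_\star}\right\rceil . \]
   Context: $\widehat M := \frac1N\sum_{s=1}^N y^{(s)}x^{(s)}x^{(s)\top}$ for samples $x^{(s)}\in\{\pm1\}^d$, $y^{(s)} = x^{(s)}_1x^{(s)}_2$. Phase-1 updates: $a_{t+1} = \mathrm{clip}_{[-1,1]}(a_t + \frac\alpha2 q_t)$, $w_{t+1} = \frac{w_t + \alpha a_t\widehat M w_t}{\|w_t + \alpha a_t\widehat M w_t\|_2}$, $q_t := w_t^\top\widehat M w_t$, with $w_0$ a unit vector. $c_0>0$ is a constant (in the paper, $c_0\in(0,\sqrt3/2)$ from the lower bound $\Pr[|q_0|\ge c_0/\sqrt N]\ge p_{PZ}(c_0)$). $(z)_+ = \max\{z,0\}$. *)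

theory Defs
  imports "HOL-Analysis.Analysis"
begin

definition clip :: "real \<Rightarrow> real \<Rightarrow> real \<Rightarrow> real" where
  "clip lo hi z = max lo (min hi z)"

definition pos_part :: "real \<Rightarrow> real" where
  "pos_part z = max z 0"

definition Mhat :: "nat \<Rightarrow> (nat \<Rightarrow> real^'d) \<Rightarrow> 'd \<Rightarrow> 'd \<Rightarrow> real^'d^'d" where
  "Mhat N x i1 i2 = (\<chi> i j. (1 / real N) *
      (\<Sum>s<N. (x s $ i1 * x s $ i2) * (x s $ i * x s $ j)))"

definition spec_norm :: "real^'n^'m \<Rightarrow> real" where
  "spec_norm A = onorm (\<lambda>v. A *v v)"

end

theory Submission
  imports Defs
begin

(* Write sigma = sgn q_0. The w-update is one normalized power-iteration step
   w |-> (w + beta M w) / |w + beta M w| with beta = alpha a_t, and for symmetric M the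
   Rayleigh quotient moves in the direction of sgn beta as long as |beta| |M| <= 1/2.
   Hence, while |a_t| < a_star, induction keeps sigma a_t > 0 and sigma q_t >= |q_0|,
   so sigma a_t increases by at least alpha |q_0| / 2 >= alpha q_star / 2 per step until
   it is clipped at 1 >= a_star; this bounds the hitting time. *)

lemma inner_matrix_vector_mult_sym:
  fixes M :: "real^'n^'n"
  assumes "transpose M = M"
  shows "x \<bullet> (M *v y) = (M *v x) \<bullet> y"
  by (metis assms dot_lmul_matrix transpose_matrix_vector)

lemma transpose_Mhat: "transpose (Mhat N x i1 i2) = Mhat N x i1 i2"
  by (simp add: transpose_def Mhat_def vec_eq_iff mult.commute mult.left_commute)

lemma power_step_rayleigh_identity:
  fixes f :: "'a::real_inner \<Rightarrow> 'a" and w :: 'a and \<beta> :: real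
  assumes lin: "linear f" and sym: "\<And>x y. x \<bullet> f y = f x \<bullet> y" and w: "norm w = 1"
  defines "q \<equiv> w \<bullet> f w" and "u \<equiv> f w - (w \<bullet> f w) *\<^sub>R w" and "v \<equiv> w + \<beta> *\<^sub>R f w"
  shows "v \<bullet> f v - q * (v \<bullet> v) = \<beta> * ((2 + \<beta> * q) * (u \<bullet> u) + \<beta> * (u \<bullet> f u))"
proof -
  have ww: "w \<bullet> w = 1" using w by (simp add: dot_square_norm)
  have wu: "w \<bullet> u = 0" unfolding u_def by (simp add: inner_diff_right ww inner_commute)
  have uw: "u \<bullet> w = 0" using wu by (simp add: inner_commute)
  have fw: "f w = u + q *\<^sub>R w" by (simp add: u_def q_def)
  have wfu: "w \<bullet> f u = u \<bullet> u"
    unfolding sym fw by (simp add: inner_add_left wu)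
  have v: "v = (1 + \<beta> * q) *\<^sub>R w + \<beta> *\<^sub>R u" by (simp add: v_def fw algebra_simps)
  have fv: "f v = (1 + \<beta> * q) *\<^sub>R (u + q *\<^sub>R w) + \<beta> *\<^sub>R f u"
    unfolding v fw[symmetric] using lin by (simp add: linear_add linear_scale)
  have vfv: "v \<bullet> f v = (1 + \<beta> * q)\<^sup>2 * q + 2 * (1 + \<beta> * q) * \<beta> * (u \<bullet> u) + \<beta>\<^sup>2 * (u \<bullet> f u)"
    unfolding fv by (simp add: v inner_add_left inner_add_right ww wu uw wfu power2_eq_square algebra_simps)
  have vv: "v \<bullet> v = (1 + \<beta> * q)\<^sup>2 + \<beta>\<^sup>2 * (u \<bullet> u)"
    unfolding v by (simp add: inner_add_left inner_add_right ww wu uw power2_eq_square algebra_simps)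
  show ?thesis
    unfolding vfv vv by (simp add: power2_eq_square algebra_simps)
qed

lemma power_step_rayleigh_mono:
  fixes f :: "'a::real_inner \<Rightarrow> 'a" and w :: 'a and \<beta> K :: real
  assumes lin: "linear f" and sym: "\<And>x y. x \<bullet> f y = f x \<bullet> y"
    and bound: "\<And>x. norm (f x) \<le> K * norm x"
    and w: "norm w = 1" and small: "\<bar>\<beta>\<bar> * K \<le> 1 / 2"
  defines "v \<equiv> w + \<beta> *\<^sub>R f w"
  shows "v \<noteq> 0" and "0 \<le> \<beta> * ((v /\<^sub>R norm v) \<bullet> f (v /\<^sub>R norm v) - w \<bullet> f w)"
proof -
  define q where "q = w \<bullet> f w"
  define u where "u = f w - (w \<bullet> f w) *\<^sub>R w"
  define S where "S = (2 + \<beta> * q) * (u \<bullet> u) + \<beta> * (u \<bullet> f u)"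
  have fw: "norm (f w) \<le> K" using bound[of w] w by simp
  have "norm (\<beta> *\<^sub>R f w) \<le> \<bar>\<beta>\<bar> * K" using fw by (simp add: mult_left_mono)
  then have "norm (\<beta> *\<^sub>R f w) < norm w" using small w by linarith
  then show v0: "v \<noteq> 0" unfolding v_def by (metis add_eq_0_iff norm_minus_cancel less_irrefl)
  have "\<bar>q\<bar> \<le> K" unfolding q_def using Cauchy_Schwarz_ineq2[of w "f w"] w fw by simp
  then have "\<bar>\<beta> * q\<bar> \<le> \<bar>\<beta>\<bar> * K" by (simp add: abs_mult mult_left_mono)
  then have bq: "\<bar>\<beta> * q\<bar> \<le> 1 / 2" using small by linarith
  have "\<bar>u \<bullet> f u\<bar> \<le> norm u * norm (f u)" by (rule Cauchy_Schwarz_ineq2)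
  also have "\<dots> \<le> norm u * (K * norm u)" by (rule mult_left_mono[OF bound norm_ge_zero])
  finally have "\<bar>u \<bullet> f u\<bar> \<le> K * (u \<bullet> u)" by (simp add: dot_square_norm power2_eq_square mult_ac)
  then have "\<bar>\<beta> * (u \<bullet> f u)\<bar> \<le> \<bar>\<beta>\<bar> * K * (u \<bullet> u)"
    unfolding abs_mult mult.assoc by (rule mult_left_mono) simp
  also have "\<dots> \<le> 1 / 2 * (u \<bullet> u)" by (rule mult_right_mono[OF small inner_ge_zero])
  finally have "\<bar>\<beta> * (u \<bullet> f u)\<bar> \<le> 1 / 2 * (u \<bullet> u)" .
  moreover have "3 / 2 * (u \<bullet> u) \<le> (2 + \<beta> * q) * (u \<bullet> u)"
    using bq by (intro mult_right_mono) (auto simp: abs_le_iff)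
  ultimately have "0 \<le> S"
    unfolding S_def using abs_ge_minus_self[of "\<beta> * (u \<bullet> f u)"] inner_ge_zero[of u] by linarith
  have "(v /\<^sub>R norm v) \<bullet> f (v /\<^sub>R norm v) - q = (v \<bullet> f v - q * (v \<bullet> v)) / (v \<bullet> v)"
    using v0 lin by (simp add: linear_scale dot_square_norm field_simps power2_eq_square)
  also have "\<dots> = \<beta> * S / (v \<bullet> v)"
    unfolding v_def q_def S_def u_def by (simp only: power_step_rayleigh_identity[OF lin sym w])
  finally show "0 \<le> \<beta> * ((v /\<^sub>R norm v) \<bullet> f (v /\<^sub>R norm v) - w \<bullet> f w)"
    using \<open>0 \<le> S\<close> by (simp add: q_def mult.assoc[symmetric] flip: power2_eq_square)
qed

lemma sgn_mult_pos_imp_sgn_eq: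
  fixes s z :: real
  assumes "0 < sgn s * z"
  shows "sgn z = sgn s"
  using assms by (auto simp: sgn_real_def zero_less_mult_iff split: if_splits)

lemma sgn_mult_pos_imp_abs_eq:
  fixes s z :: real
  assumes "0 < sgn s * z"
  shows "\<bar>z\<bar> = sgn s * z"
  using assms by (auto simp: sgn_real_def zero_less_mult_iff split: if_splits)

lemma sgn_mult_clip:
  fixes s z :: real
  assumes "0 < sgn s * z"
  shows "sgn s * clip (-1) 1 z = min 1 (sgn s * z)"
  using assms by (auto simp: clip_def sgn_real_def zero_less_mult_iff split: if_splits)

locale phase1_dynamics =
  fixes f :: "'a::real_inner \<Rightarrow> 'a" and K \<alpha> astar :: real
    and a q :: "nat \<Rightarrow> real" and w :: "nat \<Rightarrow> 'a"
  assumes linear: "linear f"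
    and symmetric: "\<And>x y. x \<bullet> f y = f x \<bullet> y"
    and bounded: "\<And>x. norm (f x) \<le> K * norm x"
    and alpha_pos: "0 < \<alpha>"
    and astar_le_1: "astar \<le> 1"
    and stable: "\<alpha> * astar * K \<le> 1 / 2"
    and q_eq: "\<And>t. q t = w t \<bullet> f (w t)"
    and w0: "norm (w 0) = 1"
    and a_step: "\<And>t. a (Suc t) = clip (-1) 1 (a t + \<alpha> / 2 * q t)"
    and w_step: "\<And>t. w (Suc t) = (w t + (\<alpha> * a t) *\<^sub>R f (w t)) /\<^sub>R
                                    norm (w t + (\<alpha> * a t) *\<^sub>R f (w t))"
    and sign0: "sgn (a 0) = sgn (q 0)"
    and q0_nonzero: "q 0 \<noteq> 0"
begin

lemma step_normalized_and_q_mono: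
  assumes w: "norm (w t) = 1" and a_pos: "0 < sgn (q 0) * a t" and a_le: "\<bar>a t\<bar> \<le> astar"
  shows "norm (w (Suc t)) = 1" and "sgn (q 0) * q t \<le> sgn (q 0) * q (Suc t)"
proof -
  define v where "v = w t + (\<alpha> * a t) *\<^sub>R f (w t)"
  have "0 \<le> K" using bounded[of "w t"] w by (metis mult.right_neutral norm_ge_zero order_trans)
  then have "\<bar>\<alpha> * a t\<bar> * K \<le> \<alpha> * astar * K"
    using alpha_pos a_le by (simp add: abs_mult mult_right_mono)
  then have small: "\<bar>\<alpha> * a t\<bar> * K \<le> 1 / 2" using stable by linarith
  note mono = power_step_rayleigh_mono[OF linear symmetric bounded w small, folded v_def]
  have w_Suc: "w (Suc t) = v /\<^sub>R norm v" by (simp add: w_step v_def)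
  show "norm (w (Suc t)) = 1" using mono(1) by (simp add: w_Suc)
  have "0 \<le> (\<alpha> * a t) * (q (Suc t) - q t)" using mono(2) by (simp add: q_eq w_Suc)
  also have "(\<alpha> * a t) * (q (Suc t) - q t) = (\<alpha> * (sgn (q 0) * a t)) * (sgn (q 0) * (q (Suc t) - q t))"
    using q0_nonzero by (simp add: mult_ac)
  finally have "0 \<le> (\<alpha> * (sgn (q 0) * a t)) * (sgn (q 0) * (q (Suc t) - q t))" .
  moreover have "0 < \<alpha> * (sgn (q 0) * a t)" using alpha_pos a_pos by simp
  ultimately have "0 \<le> sgn (q 0) * (q (Suc t) - q t)" by (metis linorder_not_less mult_pos_neg)
  then show "sgn (q 0) * q t \<le> sgn (q 0) * q (Suc t)" unfolding right_diff_distrib by linarith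
qed

lemma a_Suc_ge:
  assumes "0 < sgn (q 0) * a t" and "\<bar>q 0\<bar> \<le> sgn (q 0) * q t"
  shows "min 1 (sgn (q 0) * a t + \<alpha> * \<bar>q 0\<bar> / 2) \<le> sgn (q 0) * a (Suc t)"
proof -
  have "sgn (q 0) * a t + \<alpha> * \<bar>q 0\<bar> / 2 \<le> sgn (q 0) * (a t + \<alpha> / 2 * q t)"
    using assms(2) alpha_pos by (simp add: algebra_simps mult_left_mono)
  moreover have "0 < \<alpha> * \<bar>q 0\<bar> / 2" using alpha_pos q0_nonzero by simp
  ultimately show ?thesis
    using assms(1) sgn_mult_clip[of "q 0" "a t + \<alpha> / 2 * q t"] by (simp add: a_step)
qed

lemma invariant_before_hitting:
  assumes "\<forall>s<t. \<bar>a s\<bar> < astar"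
  shows "norm (w t) = 1 \<and> 0 < sgn (q 0) * a t \<and> \<bar>q 0\<bar> \<le> sgn (q 0) * q t
    \<and> min 1 (\<bar>a 0\<bar> + t * (\<alpha> * \<bar>q 0\<bar> / 2)) \<le> sgn (q 0) * a t"
  using assms
proof (induction t)
  case 0
  have "sgn (q 0) * a 0 = \<bar>a 0\<bar>" "a 0 \<noteq> 0"
    using sign0 q0_nonzero by (auto simp: sgn_real_def abs_real_def split: if_splits)
  moreover have "sgn (q 0) * q 0 = \<bar>q 0\<bar>" by (simp add: abs_sgn mult.commute)
  ultimately show ?case using w0 by simp
next
  case (Suc t)
  then have IH: "norm (w t) = 1" "0 < sgn (q 0) * a t" "\<bar>q 0\<bar> \<le> sgn (q 0) * q t"
      "min 1 (\<bar>a 0\<bar> + t * (\<alpha> * \<bar>q 0\<bar> / 2)) \<le> sgn (q 0) * a t"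
    by auto
  define g where "g = \<alpha> * \<bar>q 0\<bar> / 2"
  have g: "0 < g" unfolding g_def using alpha_pos q0_nonzero by simp
  have a_Suc: "min 1 (sgn (q 0) * a t + g) \<le> sgn (q 0) * a (Suc t)"
    unfolding g_def by (rule a_Suc_ge[OF IH(2,3)])
  have "min 1 (\<bar>a 0\<bar> + Suc t * g) \<le> min 1 (sgn (q 0) * a t + g)"
    using IH(4)[folded g_def] g by (auto simp: min_def distrib_right split: if_splits)
  then have lower: "min 1 (\<bar>a 0\<bar> + Suc t * g) \<le> sgn (q 0) * a (Suc t)"
    using a_Suc by (rule order_trans)
  have "0 < min 1 (sgn (q 0) * a t + g)" using IH(2) g by simp
  then have pos: "0 < sgn (q 0) * a (Suc t)" using a_Suc by linarith
  have "\<bar>a t\<bar> \<le> astar" using Suc.prems by (simp add: less_imp_le)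
  note step = step_normalized_and_q_mono[OF IH(1,2) this]
  show ?case using lower[unfolded g_def] pos step IH(3) by (intro conjI; linarith)
qed

lemma hitting_time_le:
  assumes c: "0 < c" "c \<le> \<bar>q 0\<bar>"
  shows "\<exists>t \<le> nat \<lceil>2 * pos_part (astar - \<bar>a 0\<bar>) / (\<alpha> * c)\<rceil>. astar \<le> \<bar>a t\<bar>"
proof (rule ccontr)
  define n where "n = nat \<lceil>2 * pos_part (astar - \<bar>a 0\<bar>) / (\<alpha> * c)\<rceil>"
  assume "\<not> (\<exists>t \<le> n. astar \<le> \<bar>a t\<bar>)"
  then have below: "\<forall>s \<le> n. \<bar>a s\<bar> < astar" by (meson not_le)
  then have inv: "0 < sgn (q 0) * a n" "min 1 (\<bar>a 0\<bar> + n * (\<alpha> * \<bar>q 0\<bar> / 2)) \<le> sgn (q 0) * a n"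
    using invariant_before_hitting[of n] by auto
  have "2 * pos_part (astar - \<bar>a 0\<bar>) / (\<alpha> * c) \<le> n"
    unfolding n_def by (rule real_nat_ceiling_ge)
  then have "2 * pos_part (astar - \<bar>a 0\<bar>) \<le> n * (\<alpha> * c)"
    using alpha_pos c by (simp add: divide_le_eq)
  moreover have "astar - \<bar>a 0\<bar> \<le> pos_part (astar - \<bar>a 0\<bar>)" by (simp add: pos_part_def)
  ultimately have "2 * (astar - \<bar>a 0\<bar>) \<le> n * (\<alpha> * c)" by argo
  also have "\<dots> \<le> n * (\<alpha> * \<bar>q 0\<bar>)"
    using alpha_pos c by (intro mult_left_mono) auto
  finally have "astar \<le> min 1 (\<bar>a 0\<bar> + n * (\<alpha> * \<bar>q 0\<bar> / 2))"
    using astar_le_1 by simp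
  then have "astar \<le> \<bar>a n\<bar>" using inv sgn_mult_pos_imp_abs_eq[OF inv(1)] by linarith
  then show False using below by auto
qed

lemma signs_before_hitting:
  assumes "t < (LEAST t. astar \<le> \<bar>a t\<bar>)"
  shows "sgn (a t) = sgn (q 0)" and "sgn (q t) = sgn (q 0)" and "\<bar>q 0\<bar> \<le> \<bar>q t\<bar>"
proof -
  have "\<bar>a s\<bar> < astar" if "s < t" for s
    using not_less_Least[of s "\<lambda>t. astar \<le> \<bar>a t\<bar>"] that assms by simp
  then have a_pos: "0 < sgn (q 0) * a t" and q_ge: "\<bar>q 0\<bar> \<le> sgn (q 0) * q t"
    using invariant_before_hitting by auto
  then have q_pos: "0 < sgn (q 0) * q t" using q0_nonzero by linarith
  show "sgn (a t) = sgn (q 0)" by (rule sgn_mult_pos_imp_sgn_eq[OF a_pos])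
  show "sgn (q t) = sgn (q 0)" by (rule sgn_mult_pos_imp_sgn_eq[OF q_pos])
  show "\<bar>q 0\<bar> \<le> \<bar>q t\<bar>" using q_ge sgn_mult_pos_imp_abs_eq[OF q_pos] by simp
qed

end

theorem lemma7:
  fixes N :: nat and x :: "nat \<Rightarrow> real^'d" and i1 i2 :: 'd
    and \<alpha> astar c0 :: real and a :: "nat \<Rightarrow> real" and w :: "nat \<Rightarrow> real^'d"
  defines "M \<equiv> Mhat N x i1 i2"
  defines "q \<equiv> (\<lambda>t. w t \<bullet> (M *v w t))"
  defines "qstar \<equiv> c0 / sqrt (real N)"
  assumes N_pos: "N \<ge> 1"
    and idx: "i1 \<noteq> i2"
    and samples: "\<And>s k. s < N \<Longrightarrow> x s $ k = 1 \<or> x s $ k = -1"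
    and alpha_pos: "\<alpha> > 0"
    and astar: "0 < astar" "astar \<le> 1"
    and c0_pos: "c0 > 0"
    and w0: "norm (w 0) = 1"
    and a_step: "\<And>t. a (Suc t) = clip (-1) 1 (a t + \<alpha> / 2 * q t)"
    and w_step: "\<And>t. w (Suc t) = (w t + (\<alpha> * a t) *\<^sub>R (M *v w t)) /\<^sub>R
                                    norm (w t + (\<alpha> * a t) *\<^sub>R (M *v w t))"
    and sign0: "sgn (a 0) = sgn (q 0)"
    and q0: "\<bar>q 0\<bar> \<ge> qstar"
    and stab: "\<alpha> * astar * spec_norm M \<le> 1 / 2"
  shows "(\<exists>t. astar \<le> \<bar>a t\<bar>)
    \<and> (\<forall>t < (LEAST t. astar \<le> \<bar>a t\<bar>).
          sgn (a t) = sgn (q t) \<and> sgn (q t) = sgn (q 0) \<and> \<bar>q t\<bar> \<ge> \<bar>q 0\<bar> \<and> \<bar>q 0\<bar> \<ge> qstar)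
    \<and> int (LEAST t. astar \<le> \<bar>a t\<bar>)
        \<le> \<lceil>2 * pos_part (astar - \<bar>a 0\<bar>) / (\<alpha> * qstar)\<rceil>"
proof -
  have symmetric: "\<And>u v. u \<bullet> (M *v v) = (M *v u) \<bullet> v"
    unfolding M_def by (rule inner_matrix_vector_mult_sym[OF transpose_Mhat])
  have qstar_pos: "0 < qstar" unfolding qstar_def using c0_pos N_pos by simp
  then have "q 0 \<noteq> 0" using q0 by linarith
  then interpret phase1_dynamics "(*v) M" "spec_norm M" \<alpha> astar a q w
    using matrix_vector_mul_linear symmetric onorm[OF matrix_vector_mul_bounded_linear]
      alpha_pos astar(2) stab w0 a_step w_step sign0
    by unfold_locales (auto simp: q_def spec_norm_def matrix_vector_right_distrib matrix_vector_mult_scaleR)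
  define B where "B = 2 * pos_part (astar - \<bar>a 0\<bar>) / (\<alpha> * qstar)"
  have "0 \<le> B" unfolding B_def using alpha_pos qstar_pos by (simp add: pos_part_def)
  obtain t where t: "t \<le> nat \<lceil>B\<rceil>" "astar \<le> \<bar>a t\<bar>"
    using hitting_time_le[OF qstar_pos q0] unfolding B_def by blast
  then have "(LEAST t. astar \<le> \<bar>a t\<bar>) \<le> nat \<lceil>B\<rceil>"
    using Least_le[of "\<lambda>t. astar \<le> \<bar>a t\<bar>" t] by linarith
  then have "int (LEAST t. astar \<le> \<bar>a t\<bar>) \<le> \<lceil>B\<rceil>" using \<open>0 \<le> B\<close> by (simp add: le_nat_iff)
  moreover have "sgn (a s) = sgn (q s) \<and> sgn (q s) = sgn (q 0) \<and> \<bar>q s\<bar> \<ge> \<bar>q 0\<bar> \<and> \<bar>q 0\<bar> \<ge> qstar"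
    if "s < (LEAST t. astar \<le> \<bar>a t\<bar>)" for s
    using signs_before_hitting[OF that] q0 by simp
  ultimately show ?thesis using t(2) unfolding B_def by blast
qed

end
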